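(* Let $a>b\geq1$ be coprime integers, $p=a/b$, $\hat n\geq 1$ an integer, $N=(2^b+2)\hat n+2^{a-b}+2^b$, and let $g_0=\mathbf{1}_{(2^b+1)\hat n}\circ\mathbf{0}_{\hat n}\circ\mathbf{0}_{2^{a-b}}\circ\mathbf{1}_{2^b}$ and, for $i\in[2^{a-b}]$, $g_i=\mathbf{0}_{(2^b+2)\hat n}\circ\mathbf{0}_{i-1}\circ 1\circ\mathbf{0}_{2^{a-b}+2^b-i}$. Let $s^*\in\{0,1\}^N$ have zeros in all of its last $2^{a-b}+2^b$ positions. (1) If $\mathrm{hs}(s^*,\mathbf{0}_N)\subseteq[(2^b+1)\hat n]$ and $d(s^*,\mathbf{0}_N)=\hat n$, then $\sum_{i=0}^{2^{a-b}}d(s^*,g_i)^p=(2^a+2^{a-b})(\hat n+1)^p$. (2) Otherwise $\sum_{i=0}^{2^{a-b}}d(s^*,g_i)^p>(2^a+2^{a-b})(\hat n+1)^p$.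
   Context: $d$ denotes Hamming distance; $\mathrm{hs}(s,s')=\{j: s[j]\neq s'[j]\}$; $\mathbf{0}_\ell,\mathbf{1}_\ell$ are the all-zero/all-one strings of length $\ell$; $\circ$ is concatenation; $[t]=\{1,\dots,t\}$. *)

theory Defs
  imports Complex_Main
begin

text \<open>Binary strings are boolean lists (True = 1, False = 0); concatenation is @.
  Positions are 1-based as in the paper.\<close>

definition zeros :: "nat \<Rightarrow> bool list" where "zeros l = replicate l False"
definition ones :: "nat \<Rightarrow> bool list" where "ones l = replicate l True"

definition hs :: "bool list \<Rightarrow> bool list \<Rightarrow> nat set" where
  "hs s s' = {j. 1 \<le> j \<and> j \<le> length s \<and> s ! (j - 1) \<noteq> s' ! (j - 1)}"

definition hamming :: "bool list \<Rightarrow> bool list \<Rightarrow> nat" where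
  "hamming s s' = card (hs s s')"

end

theory Submission imports Defs begin

text \<open>Write \<open>n\<^sub>1 = (2^b+1) n\<close>, split a candidate \<open>s\<close> as \<open>A \<circ> B \<circ> \<zero>\<close> with
  \<open>|A| = n\<^sub>1\<close>, \<open>|B| = n\<close>, and let \<open>x\<close>, \<open>y\<close> count the ones in \<open>A\<close> and \<open>B\<close>. Then
  \<open>d(s, g\<^sub>0) = 2^b (n+1) - (x - n) + y\<close> and \<open>d(s, g\<^sub>i) = (n+1) + (x - n) + y\<close> for the
  \<open>2^{a-b}\<close> other strings. Since \<open>(2^b)^{p-1} = 2^{a-b}\<close>, the tangent-line bounds of the
  strictly convex map \<open>t \<mapsto> t^p\<close> at \<open>2^b (n+1)\<close> and at \<open>n+1\<close> cancel in the
  first-order term \<open>x - n\<close> and leave \<open>2 p 2^{a-b} (n+1)^{p-1} y \<ge> 0\<close>; equality holds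
  exactly when \<open>x = n\<close> and \<open>y = 0\<close>.\<close>

lemma hs_conv_image_Suc: "hs s t = Suc ` {k. k < length s \<and> s ! k \<noteq> t ! k}"
proof (rule set_eqI)
  fix j
  show "j \<in> hs s t \<longleftrightarrow> j \<in> Suc ` {k. k < length s \<and> s ! k \<noteq> t ! k}"
    unfolding hs_def by (cases j) auto
qed

lemma hamming_conv_filter_zip:
  assumes "length s = length t"
  shows "hamming s t = length (filter (\<lambda>(u, v). u \<noteq> v) (zip s t))"
  unfolding hamming_def hs_conv_image_Suc length_filter_conv_card
  using assms by (auto simp: card_image intro!: arg_cong[where f = card])

lemma hamming_append:
  assumes "length s = length t" and "length s' = length t'"
  shows "hamming (s @ s') (t @ t') = hamming s t + hamming s' t'"
  using assms by (simp add: hamming_conv_filter_zip zip_append)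

lemma hamming_replicate_False: "hamming s (replicate (length s) False) = count_list s True"
  by (induction s) (simp_all add: hamming_conv_filter_zip)

lemma hamming_replicate_False_left: "hamming (replicate (length t) False) t = count_list t True"
  by (induction t) (simp_all add: hamming_conv_filter_zip)

lemma hamming_replicate_True:
  "hamming s (replicate (length s) True) = length s - count_list s True"
  by (induction s) (simp_all add: hamming_conv_filter_zip Suc_diff_le count_le_length)

lemma hs_zeros: "hs s (zeros (length s)) = Suc ` {k. k < length s \<and> s ! k}"
  unfolding hs_conv_image_Suc zeros_def by (rule arg_cong[where f = "image Suc"]) auto

lemma hs_zeros_subset_iff:
  "hs s (zeros (length s)) \<subseteq> {1..n} \<longleftrightarrow> True \<notin> set (drop n s)"
proof -
  have "hs s (zeros (length s)) \<subseteq> {1..n} \<longleftrightarrow> (\<forall>k < length s. s ! k \<longrightarrow> k < n)"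
    by (auto simp: hs_zeros)
  also have "\<dots> \<longleftrightarrow> (\<forall>i < length (drop n s). \<not> drop n s ! i)"
  proof safe
    fix i assume "\<forall>k < length s. s ! k \<longrightarrow> k < n" "i < length (drop n s)" "drop n s ! i"
    then show False by (auto dest: spec[of _ "n + i"])
  next
    fix k assume "\<forall>i < length (drop n s). \<not> drop n s ! i" "k < length s" "s ! k"
    then show "k < n" by (cases "k < n") (auto dest: spec[of _ "k - n"])
  qed
  also have "\<dots> \<longleftrightarrow> True \<notin> set (drop n s)"
    by (auto simp: in_set_conv_nth)
  finally show ?thesis .
qed

lemma hamming_zeros: "hamming s (zeros (length s)) = count_list s True"
  by (simp add: zeros_def hamming_replicate_False)

lemma hamming_append_block_pattern:
  assumes "length A = n" and "length B = m"
  shows "hamming (A @ B @ replicate (k + l) False)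
           (replicate n True @ replicate m False @ replicate k False @ replicate l True)
         = n - count_list A True + count_list B True + l"
  using assms hamming_replicate_True[of A] hamming_replicate_False[of B]
    hamming_replicate_False[of "replicate k False"] hamming_replicate_True[of "replicate l False"]
  by (simp add: replicate_add hamming_append)

lemma hamming_append_unit_vector:
  assumes "1 \<le> i" and "i \<le> k"
  shows "hamming (A @ replicate k False)
           (replicate (length A) False @ replicate (i - 1) False @ [True] @ replicate (k - i) False)
         = count_list A True + 1"
proof -
  let ?e = "replicate (i - 1) False @ [True] @ replicate (k - i) False"
  have "length ?e = k" using assms by simp
  then show ?thesis
    using hamming_replicate_False_left[of ?e]
    by (simp add: hamming_append hamming_replicate_False)
qed

lemma obtain_blocks_with_False_tail:
  assumes "length s = n + m + t" and "\<forall>j. n + m \<le> j \<and> j < length s \<longrightarrow> \<not> s ! j"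
  obtains A B where "s = A @ B @ replicate t False" "length A = n" "length B = m"
proof
  have "drop (n + m) s = replicate t False"
    using assms by (intro nth_equalityI) auto
  then show "s = take n s @ take m (drop n s) @ replicate t False"
    by (metis append.assoc append_take_drop_id take_add)
qed (use assms in simp_all)

lemma hs_zeros_block_iff:
  assumes "s = A @ B @ replicate t False" and "length A = n"
  shows "hs s (zeros (length s)) \<subseteq> {1..n} \<and> hamming s (zeros (length s)) = m
           \<longleftrightarrow> count_list A True = m \<and> count_list B True = 0"
  unfolding hs_zeros_subset_iff hamming_zeros count_list_0_iff assms(1) using assms(2) by auto

lemma sum_atLeast0_atMost_const_tail:
  fixes f :: "nat \<Rightarrow> 'a::comm_semiring_1"
  assumes "\<And>i. i \<in> {1..K} \<Longrightarrow> f i = c"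
  shows "(\<Sum>i\<in>{0..K}. f i) = f 0 + of_nat K * c"
  using assms by (simp add: sum.atLeast_Suc_atMost)

lemma powr_tangent_line:
  fixes p z w :: real
  assumes "p > 1" "z > 0" "w > 0"
  shows powr_ge_tangent_line: "w powr p \<ge> z powr p + p * z powr (p - 1) * (w - z)"
    and powr_gt_tangent_line: "w \<noteq> z \<Longrightarrow> w powr p > z powr p + p * z powr (p - 1) * (w - z)"
proof -
  have deriv: "((\<lambda>t. t powr p) has_real_derivative p * t powr (p - 1)) (at t)" if "t > 0" for t
    using that by (intro has_real_derivative_powr) auto
  have secant_bounds: "p * u powr (p - 1) * (v - u) < v powr p - u powr p"
       "v powr p - u powr p < p * v powr (p - 1) * (v - u)"
    if uv: "0 < u" "u < v" for u v :: real
  proof -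
    obtain \<xi> where \<xi>: "u < \<xi>" "\<xi> < v" "v powr p - u powr p = p * \<xi> powr (p - 1) * (v - u)"
      using MVT2[OF \<open>u < v\<close>, of "\<lambda>t. t powr p" "\<lambda>t. p * t powr (p - 1)"] deriv uv
      by (force simp: mult.commute)
    have "u powr (p - 1) < \<xi> powr (p - 1)" "\<xi> powr (p - 1) < v powr (p - 1)"
      using \<xi> uv assms by (auto intro!: powr_less_mono2)
    then show "p * u powr (p - 1) * (v - u) < v powr p - u powr p"
              "v powr p - u powr p < p * v powr (p - 1) * (v - u)"
      unfolding \<xi>(3) using uv assms by (simp_all add: mult_strict_right_mono)
  qed
  show strict: "w powr p > z powr p + p * z powr (p - 1) * (w - z)" if "w \<noteq> z"
    using that secant_bounds(1)[of z w] secant_bounds(2)[of w z] assms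
    by (cases "z < w") (auto simp: algebra_simps)
  show "w powr p \<ge> z powr p + p * z powr (p - 1) * (w - z)"
    using strict by (cases "w = z") force+
qed

text \<open>Moving mass \<open>u\<close> from \<open>C\<close> to \<open>K\<close> copies of \<open>M\<close> is free to first order precisely
  because \<open>C^{p-1} = K M^{p-1}\<close>; adding \<open>v\<close> everywhere costs \<open>2 p K M^{p-1} v\<close>.\<close>

lemma powr_balanced_sum_gt:
  fixes p C M K u v :: real
  assumes p: "p > 1" and pos: "C > 0" "M > 0" "K > 0"
    and balanced: "C powr (p - 1) = K * M powr (p - 1)"
    and v: "v \<ge> 0" and D: "C - u + v > 0" and E: "M + u + v > 0"
    and nontrivial: "u \<noteq> 0 \<or> v > 0"
  shows "(C - u + v) powr p + K * (M + u + v) powr p > C powr p + K * M powr p"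
proof -
  let ?D = "C - u + v" and ?E = "M + u + v"
  have first_order:
    "p * C powr (p - 1) * (?D - C) + K * (p * M powr (p - 1) * (?E - M))
       = 2 * p * K * M powr (p - 1) * v"
    unfolding balanced by (simp add: algebra_simps)
  have tD: "?D powr p \<ge> C powr p + p * C powr (p - 1) * (?D - C)"
    using powr_ge_tangent_line[OF p pos(1) D] .
  have tE: "K * ?E powr p \<ge> K * (M powr p + p * M powr (p - 1) * (?E - M))"
    using powr_ge_tangent_line[OF p pos(2) E] pos(3) by simp
  have bound: "?D powr p + K * ?E powr p \<ge> C powr p + K * M powr p + 2 * p * K * M powr (p - 1) * v"
    using tD tE first_order by (simp add: algebra_simps)
  have strict_bound: "?D powr p + K * ?E powr p > C powr p + K * M powr p + 2 * p * K * M powr (p - 1) * v"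
    if "?D powr p > C powr p + p * C powr (p - 1) * (?D - C)"
    using that tE first_order by (simp add: algebra_simps)
  consider "v > 0" | "u \<noteq> 0" "v = 0" using v nontrivial by linarith
  then show ?thesis
  proof cases
    case 1
    then have "2 * p * K * M powr (p - 1) * v > 0" using p pos by simp
    then show ?thesis using bound by linarith
  next
    case 2
    then show ?thesis using strict_bound powr_gt_tangent_line[OF p pos(1) D] by simp
  qed
qed

lemma power_powr_divide:
  fixes x :: real
  assumes "x > 0" and "b > 0"
  shows "(x ^ b) powr (real a / real b) = x ^ a"
  using assms by (simp add: powr_powr powr_realpow[symmetric])

lemma two_level_powr_sum:
  fixes a b n x y :: nat and p :: real
  assumes b: "1 \<le> b" and ab: "b < a" and x: "x \<le> (2^b + 1) * n"
    and p_def: "p = real a / real b"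
  defines "S \<equiv> real ((2^b + 1) * n - x + y + 2^b) powr p + 2^(a-b) * real (x + y + 1) powr p"
    and "R \<equiv> (2^a + 2^(a-b)) * (real n + 1) powr p"
  shows "x = n \<and> y = 0 \<Longrightarrow> S = R" and "\<not> (x = n \<and> y = 0) \<Longrightarrow> S > R"
proof -
  define M where "M = real n + 1"
  define C where "C = 2^b * M"
  define K :: real where "K = 2^(a-b)"
  define u where "u = real x - real n"
  define v where "v = real y"
  have p1: "p > 1" using b ab unfolding p_def by simp
  have p_minus_1: "p - 1 = real (a - b) / real b" using b ab unfolding p_def by (simp add: field_simps)
  have Cp: "C powr p = 2^a * M powr p"
    unfolding C_def M_def p_def using b by (simp add: powr_mult power_powr_divide)
  have Cp1: "C powr (p - 1) = K * M powr (p - 1)"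
    unfolding C_def M_def K_def p_minus_1 using b by (simp add: powr_mult power_powr_divide)
  have D: "real ((2^b + 1) * n - x + y + 2^b) = C - u + v"
    using x unfolding C_def M_def u_def v_def by (simp add: of_nat_diff algebra_simps)
  have E: "real (x + y + 1) = M + u + v" unfolding M_def u_def v_def by simp
  have S: "S = (C - u + v) powr p + K * (M + u + v) powr p" unfolding S_def D E K_def by simp
  have R: "R = C powr p + K * M powr p" unfolding R_def Cp K_def M_def by (simp add: algebra_simps)
  show "x = n \<and> y = 0 \<Longrightarrow> S = R" unfolding S R u_def v_def by simp
  show "\<not> (x = n \<and> y = 0) \<Longrightarrow> S > R"
    unfolding S R
  proof (rule powr_balanced_sum_gt[OF p1 _ _ _ Cp1])
    show "C - u + v > 0" "M + u + v > 0" unfolding D[symmetric] E[symmetric] of_nat_0_less_iff by simp_all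
  qed (auto simp: C_def M_def K_def u_def v_def)
qed

theorem claim3:
  fixes a b nh :: nat and s :: "bool list"
  assumes "b \<ge> 1" and "a > b" and "coprime a b" and "nh \<ge> 1"
    and "length s = (2^b + 2) * nh + 2^(a-b) + 2^b"
    and "\<forall>j. (2^b + 2) * nh \<le> j \<and> j < length s \<longrightarrow> s ! j = False"
  defines "N \<equiv> (2^b + 2) * nh + 2^(a-b) + 2^b"
    and "p \<equiv> real a / real b"
    and "g \<equiv> (\<lambda>i::nat. if i = 0
              then ones ((2^b + 1) * nh) @ zeros nh @ zeros (2^(a-b)) @ ones (2^b)
              else zeros ((2^b + 2) * nh) @ zeros (i - 1) @ [True] @ zeros (2^(a-b) + 2^b - i))"
  shows "(hs s (zeros N) \<subseteq> {1..(2^b + 1) * nh} \<and> hamming s (zeros N) = nh \<longrightarrow>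
            (\<Sum>i\<in>{0..2^(a-b)}. real (hamming s (g i)) powr p) = (2^a + 2^(a-b)) * (real nh + 1) powr p)
       \<and> (\<not> (hs s (zeros N) \<subseteq> {1..(2^b + 1) * nh} \<and> hamming s (zeros N) = nh) \<longrightarrow>
            (\<Sum>i\<in>{0..2^(a-b)}. real (hamming s (g i)) powr p) > (2^a + 2^(a-b)) * (real nh + 1) powr p)"
proof -
  define n where "n = (2^b + 1) * nh"
  define K :: nat where "K = 2^(a-b)"
  have len: "length s = n + nh + (K + 2^b)" and N: "N = length s"
    using assms(5) unfolding N_def n_def K_def by (simp_all add: algebra_simps)
  obtain A B where s: "s = A @ B @ replicate (K + 2^b) False"
    and lengths: "length A = n" "length B = nh"
    using obtain_blocks_with_False_tail[OF len] assms(6) len unfolding n_def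
    by (auto simp: algebra_simps)
  define x y where "x = count_list A True" and "y = count_list B True"
  have x: "x \<le> n" unfolding x_def using count_le_length[of A True] lengths by simp
  have g0: "hamming s (g 0) = n - x + y + 2^b"
    unfolding g_def x_def y_def ones_def zeros_def n_def[symmetric] K_def[symmetric]
    by (subst s) (simp add: hamming_append_block_pattern lengths)
  have gi: "real (hamming s (g i)) powr p = real (x + y + 1) powr p" if "i \<in> {1..K}" for i
    using that hamming_append_unit_vector[of i "K + 2^b" "A @ B"] lengths
    unfolding g_def x_def y_def zeros_def K_def
    by (subst s) (simp add: n_def K_def algebra_simps)
  have cond: "hs s (zeros N) \<subseteq> {1..n} \<and> hamming s (zeros N) = nh \<longleftrightarrow> x = nh \<and> y = 0"
    unfolding N x_def y_def using hs_zeros_block_iff[OF s lengths(1)] by simp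
  have sum: "(\<Sum>i\<in>{0..2^(a-b)}. real (hamming s (g i)) powr p)
      = real (n - x + y + 2^b) powr p + 2^(a-b) * real (x + y + 1) powr p"
    using sum_atLeast0_atMost_const_tail[of K "\<lambda>i. real (hamming s (g i)) powr p", OF gi]
    unfolding K_def by (simp add: g0)
  show ?thesis
    using two_level_powr_sum[OF assms(1,2) x[unfolded n_def] p_def[THEN meta_eq_to_obj_eq], of y] sum cond
    unfolding n_def by auto
qed

end
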